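(* Let $p$ be a prime, $k,t\ge0$ integers, and $a,b,h$ integers with $\gcd(ab,p)=1$. Then $|R^\ast_{p^t,b}(p^k,a,h)|\le\gcd(h,p^k)$.
   Context: $e(z)=e^{2\pi iz}$. For positive integers $q,W$ and integers $a,b,h$, $R^\ast_{W,b}(q,a,h)=\sum_{1\le c\le qW,\ \gcd(c,q)=1,\ c\equiv b\ (\mathrm{mod}\ W)}e\big(\frac{ach}{qW}\big)$. Here $\gcd(0,n)=n$. *)

theory Defs
  imports "HOL-Analysis.Analysis"
begin

definition e_fun :: "real \<Rightarrow> complex" where
  "e_fun z = exp (2 * pi * \<i> * complex_of_real z)"

definition Rstar :: "nat \<Rightarrow> int \<Rightarrow> nat \<Rightarrow> int \<Rightarrow> int \<Rightarrow> complex" where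
  "Rstar W b q a h =
     (\<Sum>c \<in> {c::int. 1 \<le> c \<and> c \<le> int q * int W \<and> gcd c (int q) = 1 \<and> c mod int W = b mod int W}.
        e_fun (real_of_int (a * c * h) / real (q * W)))"

end

theory Submission
  imports Defs
begin

text \<open>
  Write \<open>q = p^k\<close> and \<open>W = p^t\<close>. If \<open>t > 0\<close> (or \<open>k = 0\<close>), the congruence
  \<open>c \<equiv> b (mod W)\<close> already makes \<open>c\<close> prime to \<open>q\<close>, so \<open>c\<close> runs through the full
  progression \<open>s + W j\<close>, \<open>0 \<le> j < q\<close>, and the sum is a unimodular factor times the
  geometric sum \<open>\<Sum>j<q. e(j a h / q)\<close>, which is \<open>q\<close> or \<open>0\<close>. If \<open>t = 0 < k\<close>, it is a
  Ramanujan sum: the sum over \<open>{1..q}\<close> minus the sum over the multiples of \<open>p\<close>, with value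
  \<open>[q | a h] q - [q/p | a h] q/p\<close>. As \<open>a\<close> is prime to \<open>p\<close>, only divisibility of \<open>h\<close>
  matters, and every case is bounded by \<open>gcd h q\<close>.
\<close>

lemma e_fun_add: "e_fun (x + y) = e_fun x * e_fun y"
  unfolding e_fun_def by (simp add: distrib_left exp_add)

lemma e_fun_of_int: "e_fun (real_of_int n) = 1"
  unfolding e_fun_def using exp_integer_2pi[of "of_int n"]
  by (simp add: mult.commute mult.left_commute)

lemma norm_e_fun: "norm (e_fun x) = 1"
  unfolding e_fun_def by (simp add: norm_exp_eq_Re)

lemma e_fun_eq_1_iff: "e_fun x = 1 \<longleftrightarrow> x \<in> \<int>"
proof
  assume "e_fun x = 1"
  then obtain n :: int where "2 * pi * x = of_int (2 * n) * pi"
    unfolding e_fun_def exp_eq_1 by auto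
  then have "x = of_int n"
    by simp
  then show "x \<in> \<int>"
    by simp
qed (auto elim: Ints_cases simp: e_fun_of_int)

lemma e_fun_of_nat_mult: "e_fun (real j * x) = e_fun x ^ j"
  unfolding e_fun_def by (metis exp_of_nat_mult mult.left_commute of_real_mult of_real_of_nat_eq)

lemma e_fun_div_eq_1_iff:
  assumes "m > 0"
  shows "e_fun (real_of_int n / real m) = 1 \<longleftrightarrow> int m dvd n"
proof -
  have "real_of_int n / real m \<in> \<int> \<longleftrightarrow> int m dvd n"
  proof
    assume "real_of_int n / real m \<in> \<int>"
    then obtain r where "real_of_int n / real m = of_int r" by (auto elim: Ints_cases)
    then have "real_of_int n = real_of_int (int m * r)"
      using assms by (simp add: field_simps)
    then show "int m dvd n"
      by (simp only: of_int_eq_iff) simp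
  next
    assume "int m dvd n"
    then obtain r where "n = int m * r" ..
    then have "real_of_int n / real m = of_int r"
      using assms by simp
    then show "real_of_int n / real m \<in> \<int>"
      by simp
  qed
  then show ?thesis by (simp add: e_fun_eq_1_iff)
qed

lemma sum_e_fun_lessThan:
  assumes "m > 0"
  shows "(\<Sum>j<m. e_fun (real_of_int (int j * n) / real m)) = (if int m dvd n then of_nat m else 0)"
proof -
  define z where "z = e_fun (real_of_int n / real m)"
  have powers: "e_fun (real_of_int (int j * n) / real m) = z ^ j" for j
    unfolding z_def e_fun_of_nat_mult[symmetric] by (simp add: mult.commute)
  have "z ^ m = 1" using powers[of m] assms by (simp add: e_fun_of_int)
  moreover have "z = 1 \<longleftrightarrow> int m dvd n"
    unfolding z_def using e_fun_div_eq_1_iff[OF assms] .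
  ultimately show ?thesis
    unfolding powers using geometric_sum[of z m] by auto
qed

lemma residue_class_interval_eq_image:
  fixes b :: int and q W :: nat
  assumes "W > 0"
  shows "{c. 1 \<le> c \<and> c \<le> int q * int W \<and> c mod int W = b mod int W} =
         (\<lambda>j. (b - 1) mod int W + 1 + int W * int j) ` {..<q}"
    (is "?S = ?f ` _")
proof
  show "?S \<subseteq> ?f ` {..<q}"
  proof
    fix c assume c: "c \<in> ?S"
    define j where "j = (c - 1) div int W"
    have decomp: "c - 1 = int W * j + (c - 1) mod int W"
      unfolding j_def by (simp add: mult.commute)
    moreover have "(c - 1) mod int W = (b - 1) mod int W"
      using c mod_diff_left_eq[of c "int W" 1] mod_diff_left_eq[of b "int W" 1] by simp
    ultimately have "c = (b - 1) mod int W + 1 + int W * j"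
      by linarith
    moreover have "0 \<le> j"
      using c assms unfolding j_def by (simp add: pos_imp_zdiv_nonneg_iff)
    moreover have "j < int q"
    proof -
      have "0 \<le> (c - 1) mod int W" "c \<le> int W * int q"
        using c assms by (simp_all add: mult.commute)
      then have "int W * j < int W * int q"
        using decomp by linarith
      then show ?thesis
        using assms by simp
    qed
    ultimately show "c \<in> ?f ` {..<q}"
      by (intro image_eqI[where x = "nat j"]) auto
  qed
next
  show "?f ` {..<q} \<subseteq> ?S"
  proof (rule image_subsetI)
    fix j assume "j \<in> {..<q}"
    define s where "s = (b - 1) mod int W + 1"
    have s: "1 \<le> s" "s \<le> int W"
      using pos_mod_bound[of "int W" "b - 1"] pos_mod_sign[of "int W" "b - 1"] assms
      unfolding s_def by linarith+
    have "int W * int j \<le> int W * (int q - 1)"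
      using \<open>j \<in> {..<q}\<close> by (intro mult_left_mono) auto
    then have "s + int W * int j \<le> int q * int W"
      using s by (simp add: algebra_simps)
    moreover have "1 \<le> s + int W * int j"
      using s by (intro add_increasing2) auto
    moreover have "(s + int W * int j) mod int W = b mod int W"
      unfolding s_def by (simp add: mod_add_left_eq)
    ultimately show "?f j \<in> ?S"
      unfolding s_def by simp
  qed
qed

lemma sum_e_fun_residue_class:
  fixes b n :: int and q W :: nat
  assumes "q > 0" "W > 0"
  shows "(\<Sum>c | 1 \<le> c \<and> c \<le> int q * int W \<and> c mod int W = b mod int W.
            e_fun (real_of_int (c * n) / real (q * W))) =
         e_fun (real_of_int (((b - 1) mod int W + 1) * n) / real (q * W)) *
         (if int q dvd n then of_nat q else 0)"
proof -
  define s where "s = (b - 1) mod int W + 1"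
  have inj: "inj_on (\<lambda>j. s + int W * int j) {..<q}"
    using assms by (auto simp: inj_on_def)
  have split: "real_of_int ((s + int W * int j) * n) / real (q * W) =
      real_of_int (s * n) / real (q * W) + real_of_int (int j * n) / real q" for j
    using assms by (simp add: field_simps)
  have "(\<Sum>c | 1 \<le> c \<and> c \<le> int q * int W \<and> c mod int W = b mod int W.
            e_fun (real_of_int (c * n) / real (q * W))) =
        (\<Sum>j<q. e_fun (real_of_int ((s + int W * int j) * n) / real (q * W)))"
    unfolding residue_class_interval_eq_image[OF assms(2)] s_def[symmetric]
    by (simp add: sum.reindex[OF inj])
  also have "\<dots> = e_fun (real_of_int (s * n) / real (q * W)) *
                   (\<Sum>j<q. e_fun (real_of_int (int j * n) / real q))"
    unfolding split e_fun_add sum_distrib_left ..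
  finally show ?thesis
    unfolding s_def sum_e_fun_lessThan[OF assms(1)] .
qed

lemma sum_e_fun_atLeastAtMost:
  fixes m :: nat and n :: int
  assumes "m > 0"
  shows "(\<Sum>c\<in>{1..int m}. e_fun (real_of_int (c * n) / real m)) =
         (if int m dvd n then of_nat m else 0)"
proof -
  have "{c. 1 \<le> c \<and> c \<le> int m * int 1 \<and> c mod int 1 = 1 mod int 1} = {1..int m}"
    by auto
  then show ?thesis
    using sum_e_fun_residue_class[where b = 1 and n = n and q = m and W = 1]
      e_fun_div_eq_1_iff[OF assms, of n] assms
    by simp
qed

lemma sum_e_fun_non_multiples:
  fixes p r :: nat and n :: int
  assumes "p > 0" "r > 0"
  shows "(\<Sum>c | 1 \<le> c \<and> c \<le> int (p * r) \<and> \<not> int p dvd c.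
            e_fun (real_of_int (c * n) / real (p * r))) =
         (if int (p * r) dvd n then of_nat (p * r) else 0) - (if int r dvd n then of_nat r else 0)"
proof -
  define f where "f c = e_fun (real_of_int (c * n) / real (p * r))" for c
  define M where "M = (\<lambda>j. int p * j) ` {1..int r}"
  have M: "M = {c \<in> {1..int (p * r)}. int p dvd c}"
  proof (intro equalityI subsetI)
    fix c assume "c \<in> M"
    then obtain j where "1 \<le> j" "j \<le> int r" "c = int p * j"
      unfolding M_def by auto
    then show "c \<in> {c \<in> {1..int (p * r)}. int p dvd c}"
      using assms mult_mono[of 1 "int p" 1 j] by auto
  next
    fix c assume "c \<in> {c \<in> {1..int (p * r)}. int p dvd c}"
    then obtain j where "c = int p * j" "1 \<le> int p * j" "int p * j \<le> int p * int r"
      by auto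
    moreover from this have "1 \<le> j" "j \<le> int r"
      using assms zero_less_mult_pos[of "int p" j] by auto
    ultimately show "c \<in> M"
      unfolding M_def by auto
  qed
  have inj: "inj_on (\<lambda>j. int p * j) {1..int r}"
    using assms by (auto simp: inj_on_def)
  have M_subset: "M \<subseteq> {1..int (p * r)}"
    unfolding M by auto
  have "{c. 1 \<le> c \<and> c \<le> int (p * r) \<and> \<not> int p dvd c} = {1..int (p * r)} - M"
    unfolding M by auto
  then have "(\<Sum>c | 1 \<le> c \<and> c \<le> int (p * r) \<and> \<not> int p dvd c. f c) =
      sum f {1..int (p * r)} - sum f M"
    using sum_diff[OF _ M_subset, of f] by simp
  also have "sum f {1..int (p * r)} = (if int (p * r) dvd n then of_nat (p * r) else 0)"
    unfolding f_def using assms by (intro sum_e_fun_atLeastAtMost) simp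
  also have "sum f M = (\<Sum>j\<in>{1..int r}. e_fun (real_of_int (j * n) / real r))"
    unfolding M_def f_def using assms by (simp add: sum.reindex[OF inj])
  also have "\<dots> = (if int r dvd n then of_nat r else 0)"
    using assms(2) by (rule sum_e_fun_atLeastAtMost)
  finally show ?thesis
    unfolding f_def .
qed

lemma coprime_prime_right_iff:
  fixes p :: "'a :: factorial_semiring_gcd"
  assumes "prime p"
  shows "coprime a p \<longleftrightarrow> \<not> p dvd a"
proof
  assume "coprime a p"
  show "\<not> p dvd a"
  proof
    assume "p dvd a"
    with \<open>coprime a p\<close> have "is_unit p"
      by (rule coprime_common_divisor) simp
    with assms show False
      by (simp add: not_prime_unit)
  qed
next
  assume "\<not> p dvd a"
  then show "coprime a p"
    using prime_imp_coprime[OF assms] by (simp add: coprime_commute)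
qed

lemma coprime_left_iff_if_mod_eq:
  fixes b c m W :: int
  assumes "m dvd W" "c mod W = b mod W"
  shows "coprime c m \<longleftrightarrow> coprime b m"
proof -
  have "c mod m = b mod m"
    using assms by (metis mod_mod_cancel)
  then show ?thesis
    by (metis coprime_iff_gcd_eq_1 gcd_red_int gcd.commute)
qed

lemma norm_Rstar_coprime_residue_class:
  fixes a b h :: int and q W :: nat
  assumes "q > 0" "W > 0" and coprime: "\<And>c. c mod int W = b mod int W \<Longrightarrow> coprime c (int q)"
  shows "norm (Rstar W b q a h) = (if int q dvd a * h then real q else 0)"
proof -
  have "Rstar W b q a h =
      (\<Sum>c | 1 \<le> c \<and> c \<le> int q * int W \<and> c mod int W = b mod int W.
         e_fun (real_of_int (c * (a * h)) / real (q * W)))"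
    unfolding Rstar_def using coprime
    by (intro sum.cong) (auto simp: coprime_iff_gcd_eq_1 ac_simps)
  also have "\<dots> = e_fun (real_of_int (((b - 1) mod int W + 1) * (a * h)) / real (q * W)) *
                   (if int q dvd a * h then of_nat q else 0)"
    using assms(1,2) by (rule sum_e_fun_residue_class)
  finally show ?thesis
    by (simp only: norm_mult norm_e_fun) simp
qed

lemma Rstar_trivial_modulus_prime_power:
  fixes a b h :: int and p k :: nat
  assumes "prime p" "k > 0"
  shows "Rstar 1 b (p ^ k) a h =
         (if int (p ^ k) dvd a * h then of_nat (p ^ k) else 0) -
         (if int (p ^ (k - 1)) dvd a * h then of_nat (p ^ (k - 1)) else 0)"
proof -
  define r where "r = p ^ (k - 1)"
  have pk: "p ^ k = p * r"
    using assms(2) by (simp add: r_def power_eq_if)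
  have "gcd c (int (p ^ k)) = 1 \<longleftrightarrow> \<not> int p dvd c" for c
    using assms coprime_prime_right_iff[of "int p" c] by (simp flip: coprime_iff_gcd_eq_1)
  then have "{c. 1 \<le> c \<and> c \<le> int (p ^ k) * int 1 \<and> gcd c (int (p ^ k)) = 1 \<and> c mod int 1 = b mod int 1} =
      {c. 1 \<le> c \<and> c \<le> int (p * r) \<and> \<not> int p dvd c}"
    unfolding pk by auto
  moreover have "a * c * h = c * (a * h)" for c
    by (simp add: ac_simps)
  ultimately have "Rstar 1 b (p ^ k) a h =
      (\<Sum>c | 1 \<le> c \<and> c \<le> int (p * r) \<and> \<not> int p dvd c.
         e_fun (real_of_int (c * (a * h)) / real (p * r)))"
    unfolding Rstar_def by (simp only: pk mult_1_right)
  also have "\<dots> = (if int (p * r) dvd a * h then of_nat (p * r) else 0) -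
                   (if int r dvd a * h then of_nat r else 0)"
    using assms(1) by (intro sum_e_fun_non_multiples) (auto simp: r_def prime_gt_0_nat)
  finally show ?thesis
    unfolding r_def[symmetric] pk .
qed

lemma norm_dvd_indicator_diff_le_gcd:
  fixes q r :: nat and h :: int
  assumes "q > 0" "r dvd q"
  shows "norm ((if int q dvd h then of_nat q else 0) - (if int r dvd h then of_nat r else 0) :: complex)
         \<le> real_of_int (gcd h (int q))"
proof -
  have "r \<le> q"
    using assms by (simp add: dvd_imp_le)
  have "0 < gcd h (int q)"
    using assms(1) by simp
  consider "int q dvd h" | "\<not> int q dvd h" "int r dvd h" | "\<not> int r dvd h"
    by blast
  then show ?thesis
  proof cases
    case 1
    then have "int r dvd h"
      using assms(2) dvd_trans by (meson of_nat_dvd_iff)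
    with 1 show ?thesis
      using \<open>r \<le> q\<close> by (simp add: gcd_proj2_iff flip: of_nat_diff)
  next
    case 2
    then have "int r dvd gcd h (int q)"
      using assms(2) by simp
    then have "int r \<le> gcd h (int q)"
      using \<open>0 < gcd h (int q)\<close> by (rule zdvd_imp_le)
    then show ?thesis
      using 2 by simp
  next
    case 3
    then have "\<not> int q dvd h"
      using assms(2) dvd_trans by (meson of_nat_dvd_iff)
    with 3 show ?thesis
      using \<open>0 < gcd h (int q)\<close> by simp
  qed
qed

theorem lemma2p10:
  fixes p k t :: nat and a b h :: int
  assumes "prime p" and "gcd (a * b) (int p) = 1"
  shows "norm (Rstar (p ^ t) b (p ^ k) a h) \<le> real_of_int (gcd h (int p ^ k))"
proof -
  have "p > 0"
    using assms(1) by (simp add: prime_gt_0_nat)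
  have "coprime a (int p)" and "coprime b (int p)"
    using assms(2) by (simp_all flip: coprime_iff_gcd_eq_1)
  have cancel_a: "int p ^ m dvd a * h \<longleftrightarrow> int p ^ m dvd h" for m
    using \<open>coprime a (int p)\<close> by (simp add: coprime_dvd_mult_right_iff coprime_commute)
  consider "t > 0 \<or> k = 0" | "t = 0" "k > 0"
    by blast
  then show ?thesis
  proof cases
    case 1
    then have "coprime c (int (p ^ k))" if "c mod int (p ^ t) = b mod int (p ^ t)" for c
      using that \<open>coprime b (int p)\<close> coprime_left_iff_if_mod_eq[of "int p" "int (p ^ t)" c b] by auto
    then have "norm (Rstar (p ^ t) b (p ^ k) a h) = (if int (p ^ k) dvd a * h then real (p ^ k) else 0)"
      using \<open>p > 0\<close> by (intro norm_Rstar_coprime_residue_class) auto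
    then show ?thesis
      by (simp add: cancel_a gcd_proj2_iff)
  next
    case 2
    then show ?thesis
      using Rstar_trivial_modulus_prime_power[OF assms(1), of k b a h]
        norm_dvd_indicator_diff_le_gcd[of "p ^ k" "p ^ (k - 1)" h] \<open>p > 0\<close>
      by (simp add: cancel_a le_imp_power_dvd)
  qed
qed

end
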